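(* Let $S$ be a locally compact Hausdorff space with Borel $\sigma$-algebra $\mathscr{S}$, let $N>n$, and let $X=(X_1,\ldots,X_n)$ be an exchangeable random element of $S^n$ such that the law of $X_1$ is tight. If $\mathcal L$ is an extending functional (for $n$, $N$ and the law of $X$) with $\|\mathcal L\|=1$, then the restriction of $\mathcal L$ to the space $C_c(S^N)$ of continuous compactly supported functions on $S^N$ has norm $1$ (with respect to the sup norm).
   Context: $b(S^k)$ is the space of bounded measurable real functions on $S^k$ with the sup norm. With $\mathfrak S[n,N]$ the set of injections $\{1,\ldots,n\}\to\{1,\ldots,N\}$ and $(N)_n=N(N-1)\cdots(N-n+1)$, $U^N_ng(x_1,\ldots,x_N)=\frac1{(N)_n}\sum_{\sigma\in\mathfrak S[n,N]}g(x_{\sigma(1)},\ldots,x_{\sigma(n)})$. The primitive extending functional $\mathcal E$ on $U^N_n(b(S^n))$ is $\mathcal E(U^N_ng)=\mathbb{E}\,g(X)$ (well defined). An extending functional is a linear functional $\mathcal L:b(S^N)\to\mathbb{R}$ which is invariant under permutations of the arguments of its input, agrees with $\mathcal E$ on $U^N_n(b(S^n))$, and has $\|\mathcal L\|=\|\mathcal E\|$. A probability measure $P$ on $S$ is tight if for every $\epsilon>0$ there is a compact $K$ with $P(K)\ge1-\epsilon$. *)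

theory Defs
  imports "HOL-Analysis.Analysis" "HOL-Probability.Probability"
begin

text \<open>Points of S^k are extensional functions on {..<k} (coordinates 0..k-1).
  S^k carries the product sigma-algebra of Borel sigma-algebras.\<close>

abbreviation SpM :: "nat \<Rightarrow> (nat \<Rightarrow> 'a::topological_space) measure" where
  "SpM k \<equiv> Pi\<^sub>M {..<k} (\<lambda>_. borel)"

definition bmeas :: "nat \<Rightarrow> ((nat \<Rightarrow> 'a::topological_space) \<Rightarrow> real) set" where
  "bmeas k = {f. f \<in> borel_measurable (SpM k) \<and> (\<exists>B. \<forall>x\<in>space (SpM k). \<bar>f x\<bar> \<le> B)}"

definition supnorm :: "nat \<Rightarrow> ((nat \<Rightarrow> 'a::topological_space) \<Rightarrow> real) \<Rightarrow> real" where
  "supnorm k f = (SUP x\<in>space (SpM k). \<bar>f x\<bar>)"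

definition fnorm :: "nat \<Rightarrow> (((nat \<Rightarrow> 'a::topological_space) \<Rightarrow> real) \<Rightarrow> real)
     \<Rightarrow> ((nat \<Rightarrow> 'a) \<Rightarrow> real) set \<Rightarrow> ereal" where
  "fnorm k L F = (SUP f\<in>{f\<in>F. supnorm k f \<le> 1}. ereal \<bar>L f\<bar>)"

definition ffac :: "nat \<Rightarrow> nat \<Rightarrow> real" where
  "ffac N n = (\<Prod>i<n. real (N - i))"

text \<open>Injections {1..n} \<rightarrow> {1..N}, shifted to {..<n} \<rightarrow> {..<N}\<close>
definition injs :: "nat \<Rightarrow> nat \<Rightarrow> (nat \<Rightarrow> nat) set" where
  "injs n N = {\<sigma>\<in>{..<n} \<rightarrow>\<^sub>E {..<N}. inj_on \<sigma> {..<n}}"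

definition U :: "nat \<Rightarrow> nat \<Rightarrow> ((nat \<Rightarrow> 'a) \<Rightarrow> real) \<Rightarrow> (nat \<Rightarrow> 'a) \<Rightarrow> real" where
  "U N n g x = (1 / ffac N n) * (\<Sum>\<sigma>\<in>injs n N. g (restrict (x \<circ> \<sigma>) {..<n}))"

definition exchangeable :: "'w measure \<Rightarrow> nat \<Rightarrow> ('w \<Rightarrow> nat \<Rightarrow> 'a::topological_space) \<Rightarrow> bool" where
  "exchangeable M n X \<longleftrightarrow>
     (\<forall>\<pi>. \<pi> permutes {..<n} \<longrightarrow> distr M (SpM n) (\<lambda>\<omega>. X \<omega> \<circ> \<pi>) = distr M (SpM n) X)"

definition tight_measure :: "'a::topological_space measure \<Rightarrow> bool" where
  "tight_measure P \<longleftrightarrow> (\<forall>e>0. \<exists>K. compact K \<and> K \<in> sets P \<and> measure P K \<ge> 1 - e)"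

definition extending_functional ::
  "'w measure \<Rightarrow> ('w \<Rightarrow> nat \<Rightarrow> 'a::topological_space) \<Rightarrow> nat \<Rightarrow> nat
     \<Rightarrow> (((nat \<Rightarrow> 'a) \<Rightarrow> real) \<Rightarrow> real) \<Rightarrow> bool" where
  "extending_functional M X n N L \<longleftrightarrow>
     (\<forall>f\<in>bmeas N. \<forall>g\<in>bmeas N. \<forall>a b. L (\<lambda>x. a * f x + b * g x) = a * L f + b * L g)
   \<and> (\<forall>f\<in>bmeas N. \<forall>\<pi>. \<pi> permutes {..<N} \<longrightarrow> L (\<lambda>x. f (x \<circ> \<pi>)) = L f)
   \<and> (\<forall>g\<in>bmeas n. L (U N n g) = (\<integral>\<omega>. g (X \<omega>) \<partial>M))
   \<and> fnorm N L (bmeas N) = fnorm N L (U N n ` bmeas n)"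

definition Cc :: "nat \<Rightarrow> ((nat \<Rightarrow> 'a::topological_space) \<Rightarrow> real) set" where
  "Cc N = {f. continuous_map (product_topology (\<lambda>_. euclidean) {..<N}) euclideanreal f
             \<and> compactin (product_topology (\<lambda>_. euclidean) {..<N})
                 ((product_topology (\<lambda>_. euclidean) {..<N}) closure_of
                    {x\<in>topspace (product_topology (\<lambda>_. euclidean) {..<N}). f x \<noteq> 0})}"

end

theory Submission
  imports Defs
begin

text \<open>An extending functional of norm one maps the constant 1 to 1, hence is positive. Given
  \<open>\<epsilon> > 0\<close>, tightness yields a compact \<open>K\<close> carrying all but \<open>\<epsilon> / (N (N)\<^sub>n)\<close> of the
  law of \<open>X\<^sub>1\<close>, and local compactness a compactly supported Urysohn function
  \<open>\<phi> : S \<rightarrow> [0,1]\<close> equal to 1 on \<open>K\<close>. Then \<open>h x = \<Prod>\<^sub>j \<phi> (x\<^sub>j)\<close> lies in the unit ball of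
  \<open>C\<^sub>c(S\<^sup>N)\<close>, and pointwise \<open>1 - h \<le> \<Sum>\<^sub>j (1 - \<phi> (x\<^sub>j)) \<le> N (N)\<^sub>n U\<^sup>N\<^sub>n g\<close> with
  \<open>g y = 1 - \<phi> (y\<^sub>1)\<close>. By positivity, \<open>1 - L h \<le> N (N)\<^sub>n E (1 - \<phi> (X\<^sub>1)) \<le> \<epsilon>\<close>.\<close>

lemma Hausdorff_space_euclidean_t2: "Hausdorff_space (euclidean :: 'a::t2_space topology)"
  unfolding Hausdorff_space_def disjnt_def by (metis hausdorff open_openin)

lemma locally_compact_Hausdorff_bump:
  assumes "locally_compact_space X" "Hausdorff_space X" "compactin X K"
  obtains \<phi> :: "'a \<Rightarrow> real" where "continuous_map X (top_of_set {0..1}) \<phi>"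
    "\<And>x. x \<in> K \<Longrightarrow> \<phi> x = 1" "compactin X (X closure_of {x\<in>topspace X. \<phi> x \<noteq> 0})"
proof -
  obtain U L where UL: "openin X U" "compactin X L" "closedin X L" "K \<subseteq> U" "U \<subseteq> L"
    using assms locally_compact_space_compact_closed_compact by metis
  have "completely_regular_space X"
    using assms locally_compact_regular_imp_completely_regular_space by blast
  moreover have "closedin X (topspace X - U)" and "disjnt K (topspace X - U)"
    using UL by (auto simp: disjnt_def)
  ultimately obtain \<phi> :: "'a \<Rightarrow> real" where \<phi>: "continuous_map X (top_of_set {0..1}) \<phi>"
      "\<phi> ` (topspace X - U) \<subseteq> {0}" "\<phi> ` K \<subseteq> {1}"
    using Urysohn_completely_regular_compact_closed[of "0::real" 1 X K "topspace X - U"] assms(3)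
    by auto
  have "X closure_of {x\<in>topspace X. \<phi> x \<noteq> 0} \<subseteq> L"
    using \<phi>(2) UL by (intro closure_of_minimal) auto
  then have "compactin X (X closure_of {x\<in>topspace X. \<phi> x \<noteq> 0})"
    using UL closed_compactin closedin_closure_of by blast
  with \<phi> show thesis using that by blast
qed

lemma prod_coordinates_in_Cc:
  fixes \<phi> :: "'a::topological_space \<Rightarrow> real"
  assumes cont: "continuous_map euclidean euclideanreal \<phi>"
    and supp: "compactin euclidean (euclidean closure_of {y\<in>topspace euclidean. \<phi> y \<noteq> 0})"
  shows "(\<lambda>x. \<Prod>j<N. \<phi> (x j)) \<in> Cc N"
proof -
  let ?PT = "product_topology (\<lambda>_. euclidean) {..<N} :: (nat \<Rightarrow> 'a) topology"
  let ?C = "euclidean closure_of {y\<in>topspace euclidean. \<phi> y \<noteq> 0}"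
  have "continuous_map ?PT euclideanreal (\<lambda>x. \<phi> (x j))" if "j \<in> {..<N}" for j
    using continuous_map_compose[OF continuous_map_product_projection[OF that] cont]
    by (simp add: comp_def)
  then have "continuous_map ?PT euclideanreal (\<lambda>x. \<Prod>j<N. \<phi> (x j))"
    by (intro continuous_map_prod) auto
  moreover have "?PT closure_of {x\<in>topspace ?PT. (\<Prod>j<N. \<phi> (x j)) \<noteq> 0} \<subseteq> PiE {..<N} (\<lambda>_. ?C)"
    by (rule closure_of_minimal)
      (auto simp: closedin_product_topology PiE_iff extensional_def
            intro: closure_subset[THEN subsetD])
  then have "compactin ?PT (?PT closure_of {x\<in>topspace ?PT. (\<Prod>j<N. \<phi> (x j)) \<noteq> 0})"
    by (rule closed_compactin[rotated]) (use supp in \<open>simp_all add: compactin_PiE\<close>)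
  ultimately show ?thesis unfolding Cc_def by simp
qed

lemma real_card_injs: "n \<le> N \<Longrightarrow> real (card (injs n N)) = ffac N n"
  using card_inj_on_subset_funcset[of "{..<n}" "{..<N}" "{..<n}"]
  by (simp add: injs_def ffac_def atLeast0LessThan of_nat_diff)

lemma ffac_pos: "n \<le> N \<Longrightarrow> 0 < ffac N n"
  unfolding ffac_def by (intro prod_pos) auto

lemma finite_injs: "finite (injs n N)"
  unfolding injs_def by (rule finite_subset[OF _ finite_PiE[of "{..<n}" "\<lambda>_. {..<N}"]]) auto

lemma U_const: "n \<le> N \<Longrightarrow> U N n (\<lambda>_. c) = (\<lambda>_. c)"
  using real_card_injs[of n N] ffac_pos[of n N] by (simp add: U_def fun_eq_iff)

lemma space_SpM_ne: "space (SpM k :: (nat \<Rightarrow> 'a::topological_space) measure) \<noteq> {}"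
  by (simp add: space_PiM PiE_eq_empty_iff)

lemma bmeas_const: "(\<lambda>x::nat \<Rightarrow> 'a::topological_space. c) \<in> bmeas k"
  by (auto simp: bmeas_def)

lemma bmeas_lin:
  fixes f g :: "(nat \<Rightarrow> 'a::topological_space) \<Rightarrow> real"
  assumes f: "f \<in> bmeas k" and g: "g \<in> bmeas k"
  shows "(\<lambda>x. a * f x + b * g x) \<in> bmeas k"
proof -
  obtain B1 B2 where B: "\<forall>x\<in>space (SpM k). \<bar>f x\<bar> \<le> B1" "\<forall>x\<in>space (SpM k). \<bar>g x\<bar> \<le> B2"
    using f g by (auto simp: bmeas_def)
  have "\<bar>a * f x + b * g x\<bar> \<le> \<bar>a\<bar> * B1 + \<bar>b\<bar> * B2" if "x \<in> space (SpM k)" for x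
  proof -
    have "\<bar>a * f x + b * g x\<bar> \<le> \<bar>a\<bar> * \<bar>f x\<bar> + \<bar>b\<bar> * \<bar>g x\<bar>"
      by (metis abs_mult abs_triangle_ineq)
    also have "\<dots> \<le> \<bar>a\<bar> * B1 + \<bar>b\<bar> * B2"
      using B that by (intro add_mono mult_left_mono) auto
    finally show ?thesis .
  qed
  then show ?thesis using f g by (auto simp: bmeas_def)
qed

lemma supnorm_upper:
  fixes f :: "(nat \<Rightarrow> 'a::topological_space) \<Rightarrow> real"
  assumes "f \<in> bmeas k" "x \<in> space (SpM k)"
  shows "\<bar>f x\<bar> \<le> supnorm k f"
proof -
  obtain B where "\<forall>x\<in>space (SpM k). \<bar>f x\<bar> \<le> B" using assms by (auto simp: bmeas_def)
  then have "bdd_above ((\<lambda>x. \<bar>f x\<bar>) ` space (SpM k))" by (auto intro: bdd_aboveI2)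
  then show ?thesis unfolding supnorm_def using assms(2) by (rule cSUP_upper2) simp
qed

lemma supnorm_le:
  fixes f :: "(nat \<Rightarrow> 'a::topological_space) \<Rightarrow> real"
  shows "(\<And>x. x \<in> space (SpM k) \<Longrightarrow> \<bar>f x\<bar> \<le> B) \<Longrightarrow> supnorm k f \<le> B"
  unfolding supnorm_def by (rule cSUP_least) (use space_SpM_ne in auto)

lemma measurable_restrict_injs:
  assumes "\<sigma> \<in> injs n N"
  shows "(\<lambda>x::nat \<Rightarrow> 'a::topological_space. restrict (x \<circ> \<sigma>) {..<n}) \<in> measurable (SpM N) (SpM n)"
proof -
  have "\<sigma> i \<in> {..<N}" if "i \<in> {..<n}" for i
    using assms that by (auto simp: injs_def)
  then show ?thesis unfolding comp_def
    by (intro measurable_restrict measurable_component_singleton) auto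
qed

lemma U_bmeas:
  fixes g :: "(nat \<Rightarrow> 'a::topological_space) \<Rightarrow> real"
  assumes g: "g \<in> bmeas n"
  shows "U N n g \<in> bmeas N"
proof -
  obtain B where B: "\<forall>y\<in>space (SpM n). \<bar>g y\<bar> \<le> B" and gm: "g \<in> borel_measurable (SpM n)"
    using g by (auto simp: bmeas_def)
  have "(\<lambda>x. g (restrict (x \<circ> \<sigma>) {..<n})) \<in> borel_measurable (SpM N)" if "\<sigma> \<in> injs n N" for \<sigma>
    using measurable_compose[OF measurable_restrict_injs[OF that] gm] .
  then have "U N n g \<in> borel_measurable (SpM N)"
    unfolding U_def by (intro borel_measurable_times borel_measurable_const borel_measurable_sum)
  moreover have "\<bar>U N n g x\<bar> \<le> \<bar>1 / ffac N n\<bar> * (real (card (injs n N)) * B)"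
    if "x \<in> space (SpM N)" for x
  proof -
    have "\<bar>\<Sum>\<sigma>\<in>injs n N. g (restrict (x \<circ> \<sigma>) {..<n})\<bar> \<le> (\<Sum>\<sigma>\<in>injs n N. B)"
      using B by (intro order.trans[OF sum_abs] sum_mono) (auto simp: space_PiM)
    then show ?thesis unfolding U_def abs_mult by (intro mult_left_mono) auto
  qed
  ultimately show ?thesis unfolding bmeas_def by blast
qed

lemma one_minus_prod_le_U:
  fixes \<phi> :: "'a \<Rightarrow> real"
  assumes "0 < n" "n \<le> N" and \<phi>: "\<And>y. \<phi> y \<in> {0..1}"
  shows "1 - (\<Prod>j<N. \<phi> (x j)) \<le> real N * ffac N n * U N n (\<lambda>y. 1 - \<phi> (y 0)) x"
proof -
  define S where "S = (\<Sum>\<sigma>\<in>injs n N. 1 - \<phi> (x (\<sigma> 0)))"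
  have term_le: "1 - \<phi> (x j) \<le> S" if "j < N" for j
  proof -
    \<comment> \<open>every coordinate is the first one selected by some injection\<close>
    define \<sigma> where "\<sigma> = (\<lambda>i\<in>{..<n}. if i = 0 then j else if i = j then 0 else i)"
    have "\<sigma> \<in> injs n N"
      unfolding injs_def \<sigma>_def using that assms(2) by (auto simp: inj_on_def)
    then have "1 - \<phi> (x (\<sigma> 0)) \<le> S"
      unfolding S_def by (rule member_le_sum) (use \<phi> finite_injs in auto)
    moreover have "\<sigma> 0 = j" using assms(1) by (simp add: \<sigma>_def)
    ultimately show ?thesis by simp
  qed
  have "1 - (\<Prod>j<N. \<phi> (x j)) \<le> (\<Sum>j<N. 1 - \<phi> (x j))"
    using Weierstrass_prod_ineq[of "{..<N}" "\<lambda>j. 1 - \<phi> (x j)"] \<phi> by auto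
  also have "\<dots> \<le> (\<Sum>j<N. S)"
    using term_le by (intro sum_mono) auto
  also have "\<dots> = real N * ffac N n * U N n (\<lambda>y. 1 - \<phi> (y 0)) x"
    using ffac_pos[OF assms(2)] assms(1) by (simp add: U_def S_def)
  finally show ?thesis .
qed

lemma ereal_abs_le_fnorm: "f \<in> F \<Longrightarrow> supnorm k f \<le> 1 \<Longrightarrow> ereal \<bar>L f\<bar> \<le> fnorm k L F"
  unfolding fnorm_def by (rule SUP_upper) simp

locale unit_functional =
  fixes k :: nat and L :: "((nat \<Rightarrow> 'a::topological_space) \<Rightarrow> real) \<Rightarrow> real"
  assumes linear: "\<And>f g a b. f \<in> bmeas k \<Longrightarrow> g \<in> bmeas k \<Longrightarrow>
      L (\<lambda>x. a * f x + b * g x) = a * L f + b * L g"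
    and fnorm_le_1: "fnorm k L (bmeas k) \<le> 1"
    and unit: "L (\<lambda>_. 1) = 1"
begin

text \<open>If \<open>0 \<le> f \<le> B\<close>, then \<open>1 - f / B\<close> lies in the unit ball.\<close>
lemma nonneg:
  assumes f: "f \<in> bmeas k" and f_nonneg: "\<And>x. x \<in> space (SpM k) \<Longrightarrow> 0 \<le> f x"
  shows "0 \<le> L f"
proof -
  obtain x0 :: "nat \<Rightarrow> 'a" where "x0 \<in> space (SpM k)" using space_SpM_ne by blast
  define B where "B = supnorm k f + 1"
  have B: "0 < B" using supnorm_upper[OF f \<open>x0 \<in> space (SpM k)\<close>] by (simp add: B_def)
  define g where "g x = 1 * 1 + (- 1 / B) * f x" for x
  have g: "g \<in> bmeas k" unfolding g_def by (intro bmeas_lin bmeas_const f)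
  have "\<bar>g x\<bar> \<le> 1" if "x \<in> space (SpM k)" for x
  proof -
    have "0 \<le> f x" "f x \<le> B"
      using f_nonneg[OF that] supnorm_upper[OF f that] by (simp_all add: B_def)
    then show ?thesis using B by (simp add: g_def field_simps)
  qed
  then have "ereal \<bar>L g\<bar> \<le> 1"
    using ereal_abs_le_fnorm[OF g supnorm_le] fnorm_le_1 order.trans by blast
  moreover have "L g = 1 - L f / B"
    unfolding g_def using linear[OF bmeas_const[where c=1] f, of 1 "- 1 / B"] unit by simp
  ultimately have "0 \<le> L f / B" by simp
  then show ?thesis using B by (simp add: zero_le_divide_iff)
qed

lemma mono:
  assumes "f \<in> bmeas k" "g \<in> bmeas k" "\<And>x. x \<in> space (SpM k) \<Longrightarrow> f x \<le> g x"
  shows "L f \<le> L g"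
proof -
  have "0 \<le> L (\<lambda>x. 1 * g x + (- 1) * f x)"
    using assms by (intro nonneg bmeas_lin) auto
  then show ?thesis using linear[OF assms(2,1), of 1 "- 1"] by simp
qed

end

lemma extending_functional_unit_functional:
  assumes "prob_space M" "n \<le> N" "extending_functional M X n N L" "fnorm N L (bmeas N) \<le> 1"
  shows "unit_functional N L"
proof
  have "L (U N n (\<lambda>_. 1)) = (\<integral>\<omega>. 1 \<partial>M)"
    using assms(3) bmeas_const unfolding extending_functional_def by blast
  then show "L (\<lambda>_. 1) = 1"
    using prob_space.prob_space[OF assms(1)] by (simp add: U_const[OF assms(2)])
qed (use assms in \<open>auto simp: extending_functional_def\<close>)

lemma tight_measure_bump:
  fixes P :: "'a::t2_space measure"
  assumes lc: "locally_compact_space (euclidean :: 'a topology)"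
    and P: "prob_space P" "sets P = sets borel"
    and tight: "tight_measure P" and e: "0 < e"
  obtains \<phi> :: "'a \<Rightarrow> real" where "continuous_on UNIV \<phi>" "compact (closure {y. \<phi> y \<noteq> 0})"
    "\<And>y. \<phi> y \<in> {0..1}" "(\<integral>y. 1 - \<phi> y \<partial>P) \<le> e"
proof -
  obtain K where K: "compact K" "K \<in> sets P" "measure P K \<ge> 1 - e"
    using tight e unfolding tight_measure_def by blast
  obtain \<phi> :: "'a \<Rightarrow> real" where \<phi>: "continuous_map euclidean (top_of_set {0..1}) \<phi>"
      "\<And>y. y \<in> K \<Longrightarrow> \<phi> y = 1" "compact (closure {y. \<phi> y \<noteq> 0})"
    using locally_compact_Hausdorff_bump[OF lc Hausdorff_space_euclidean_t2, of K] K(1) by auto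
  have cont: "continuous_on UNIV \<phi>" and range: "\<phi> y \<in> {0..1}" for y
    using \<phi>(1) by (auto simp: continuous_map_in_subtopology)
  have "(\<lambda>y. 1 - \<phi> y) \<in> borel_measurable borel"
    using cont by (intro borel_measurable_continuous_onI continuous_intros)
  then have meas: "(\<lambda>y. 1 - \<phi> y) \<in> borel_measurable P"
    by (subst measurable_cong_sets[OF P(2) refl])
  interpret prob_space P by (fact P(1))
  have "(\<integral>y. 1 - \<phi> y \<partial>P) \<le> (\<integral>y. indicator (space P - K) y \<partial>P)"
  proof (rule integral_mono)
    show "integrable P (\<lambda>y. 1 - \<phi> y)"
      using range meas by (intro integrable_const_bound[where B=1]) auto
    show "integrable P (indicator (space P - K) :: 'a \<Rightarrow> real)"
      using K(2) by (intro integrable_const_bound[where B=1]) auto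
    show "1 - \<phi> y \<le> indicator (space P - K) y" if "y \<in> space P" for y
      using range[of y] \<phi>(2)[of y] that by (cases "y \<in> K") auto
  qed
  also have "\<dots> = 1 - measure P K"
    using prob_compl[OF K(2)] by (simp add: Int_absorb2)
  finally show thesis using that cont \<phi>(3) range K(3) by simp
qed

lemma extending_functional_Cc_near_one:
  fixes X :: "'w \<Rightarrow> nat \<Rightarrow> 'a::t2_space"
  assumes lc: "locally_compact_space (euclidean :: 'a topology)"
    and n: "0 < n" "n \<le> N" and M: "prob_space M" and Xm: "X \<in> measurable M (SpM n)"
    and tight: "tight_measure (distr M borel (\<lambda>\<omega>. X \<omega> 0))"
    and ext: "extending_functional M X n N L" and norm: "fnorm N L (bmeas N) \<le> 1"
    and e: "0 < e"
  obtains h where "h \<in> Cc N \<inter> bmeas N" "supnorm N h \<le> 1" "1 - e \<le> L h"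
proof -
  interpret unit_functional N L
    using extending_functional_unit_functional[OF M n(2) ext norm] .
  define C where "C = real N * ffac N n"
  have C: "0 < C" using n ffac_pos by (simp add: C_def)
  have X0: "(\<lambda>\<omega>. X \<omega> 0) \<in> measurable M borel"
    using measurable_compose[OF Xm measurable_component_singleton] n(1) by simp
  obtain \<phi> :: "'a \<Rightarrow> real" where \<phi>: "continuous_on UNIV \<phi>" "compact (closure {y. \<phi> y \<noteq> 0})"
      "\<And>y. \<phi> y \<in> {0..1}" "(\<integral>y. 1 - \<phi> y \<partial>distr M borel (\<lambda>\<omega>. X \<omega> 0)) \<le> e / C"
    using tight_measure_bump[OF lc prob_space.prob_space_distr[OF M X0] _ tight divide_pos_pos[OF e C]]
    by auto
  have \<phi>m: "\<phi> \<in> borel_measurable borel" using \<phi>(1) by (rule borel_measurable_continuous_onI)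
  define h where "h x = (\<Prod>j<N. \<phi> (x j))" for x :: "nat \<Rightarrow> 'a"
  define g where "g = (\<lambda>y :: nat \<Rightarrow> 'a. 1 - \<phi> (y 0))"
  have h01: "h x \<in> {0..1}" for x using \<phi>(3) by (auto simp: h_def intro: prod_nonneg prod_le_1)
  have h: "h \<in> bmeas N"
    using h01 \<phi>m unfolding h_def bmeas_def by (auto intro!: measurable_compose[OF _ \<phi>m])
  have g: "g \<in> bmeas n"
    using \<phi>(3) \<phi>m n(1) unfolding g_def bmeas_def
    by (auto intro!: exI[of _ 1] measurable_compose[OF _ \<phi>m])
  have "L (U N n g) = (\<integral>\<omega>. 1 - \<phi> (X \<omega> 0) \<partial>M)"
    using ext g unfolding extending_functional_def g_def by blast
  also have "\<dots> = (\<integral>y. 1 - \<phi> y \<partial>distr M borel (\<lambda>\<omega>. X \<omega> 0))"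
    using \<phi>m by (intro integral_distr[OF X0, symmetric]) auto
  finally have Ug: "L (U N n g) \<le> e / C" using \<phi>(4) by simp
  have "1 - L h = L (\<lambda>x. 1 * 1 + (- 1) * h x)"
    using linear[OF bmeas_const[where c=1] h, of 1 "- 1"] unit by simp
  also have "\<dots> \<le> L (\<lambda>x. C * U N n g x + 0 * U N n g x)"
    using one_minus_prod_le_U[OF n, where \<phi>=\<phi>, OF \<phi>(3)]
    by (intro mono bmeas_lin bmeas_const h U_bmeas g) (simp add: h_def g_def C_def)
  also have "\<dots> = C * L (U N n g)"
    using linear[OF U_bmeas U_bmeas, OF g g, of C 0] by simp
  also have "\<dots> \<le> e" using Ug C by (simp add: field_simps)
  finally have "1 - e \<le> L h" by simp
  moreover have "h \<in> Cc N"
    unfolding h_def using \<phi>(1,2) by (intro prod_coordinates_in_Cc) auto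
  moreover have "supnorm N h \<le> 1" using h01 by (intro supnorm_le) auto
  ultimately show thesis using that h by blast
qed

theorem lemma11:
  fixes M :: "'w measure" and X :: "'w \<Rightarrow> nat \<Rightarrow> 'a::t2_space"
    and n N :: nat and L :: "((nat \<Rightarrow> 'a) \<Rightarrow> real) \<Rightarrow> real"
  assumes lc: "locally_compact_space (euclidean :: 'a topology)"
    and nN: "0 < n" "n < N"
    and P: "prob_space M"
    and Xm: "X \<in> measurable M (SpM n)"
    and exch: "exchangeable M n X"
    and tight: "tight_measure (distr M borel (\<lambda>\<omega>. X \<omega> 0))"
    and ext: "extending_functional M X n N L"
    and norm1: "fnorm N L (bmeas N) = 1"
  shows "fnorm N L (Cc N \<inter> bmeas N) = 1"
proof (rule antisym)
  have "fnorm N L (Cc N \<inter> bmeas N) \<le> fnorm N L (bmeas N)"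
    unfolding fnorm_def by (rule SUP_subset_mono) auto
  then show "fnorm N L (Cc N \<inter> bmeas N) \<le> 1" using norm1 by simp
next
  show "1 \<le> fnorm N L (Cc N \<inter> bmeas N)"
  proof (rule ereal_le_epsilon2)
    fix e :: real assume "0 < e"
    then obtain h where h: "h \<in> Cc N \<inter> bmeas N" "supnorm N h \<le> 1" "1 - e \<le> L h"
      using extending_functional_Cc_near_one[OF lc nN(1) _ P Xm tight ext] nN(2) norm1 by force
    then have "ereal (1 - e) \<le> ereal \<bar>L h\<bar>" by simp
    also have "\<dots> \<le> fnorm N L (Cc N \<inter> bmeas N)" by (rule ereal_abs_le_fnorm[OF h(1,2)])
    finally have "ereal (1 - e) + ereal e \<le> fnorm N L (Cc N \<inter> bmeas N) + ereal e"
      by (rule add_right_mono)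
    then show "1 \<le> fnorm N L (Cc N \<inter> bmeas N) + ereal e" by (simp add: one_ereal_def)
  qed
qed

end
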